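(* Let $G$ be a countable discrete group, $m$ a probability measure on $G$, $(X,\mu)$ a standard probability space, and $a,b \in \mathrm{Stat}(G,m,X,\mu)$. Then the following are equivalent. (i) $a \preceq b$. (ii) For every finite subset $F \subseteq G$, every $\epsilon > 0$ and every finite collection $A_1,\ldots,A_n$ of measurable subsets of $X$, there exist measurable subsets $B_1,\ldots,B_n$ of $X$ such that \[ \left| \mu(g^a A_i \cap h^a A_j) - \mu(g^b B_i \cap h^b B_j) \right| < \epsilon \] for all $g,h \in F$ and all $i,j \in \{1,\ldots,n\}$.
   Context: A measurable action $a$ of $G$ on $(X,\mu)$ is $m$-stationary if $\sum_{g\in G} m(g)\,\mu(g^aA)=\mu(A)$ for every measurable $A\subseteq X$, where $g^a$ denotes the (nonsingular) transformation of $X$ by which $g$ acts in $a$. $\mathrm{Stat}(G,m,X,\mu)$ is the set of $m$-stationary actions of $G$ on $(X,\mu)$. For $a,b\in\mathrm{Stat}(G,m,X,\mu)$, $a$ is weakly contained in $b$ ($a\preceq b$) if for every $\epsilon>0$, every finite $F\subseteq G$ and every finite collection $A_1,\ldots,A_n$ of measurable subsets of $X$ there are measurable $B_1,\ldots,B_n\subseteq X$ with $|\mu(g^aA_i\cap A_j)-\mu(g^bB_i\cap B_j)|<\epsilon$ for all $g\in F$ and $i,j\in\{1,\ldots,n\}$. *)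

theory Defs
  imports "HOL-Analysis.Analysis" "HOL-Probability.Probability" "HOL-Algebra.Group"
begin

definition prob_on_group :: "('g, 'b) monoid_scheme \<Rightarrow> ('g \<Rightarrow> real) \<Rightarrow> bool" where
  "prob_on_group G m \<longleftrightarrow> (\<forall>g\<in>carrier G. 0 \<le> m g) \<and> (m has_sum 1) (carrier G)"

definition nonsingular_action ::
  "('g, 'b) monoid_scheme \<Rightarrow> 'x measure \<Rightarrow> ('g \<Rightarrow> 'x \<Rightarrow> 'x) \<Rightarrow> bool" where
  "nonsingular_action G M a \<longleftrightarrow>
     (\<forall>g\<in>carrier G. a g \<in> M \<rightarrow>\<^sub>M M) \<and>
     (\<forall>x\<in>space M. a \<one>\<^bsub>G\<^esub> x = x) \<and>
     (\<forall>g\<in>carrier G. \<forall>h\<in>carrier G. \<forall>x\<in>space M. a (g \<otimes>\<^bsub>G\<^esub> h) x = a g (a h x)) \<and>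
     (\<forall>g\<in>carrier G. \<forall>A\<in>sets M. (a g -` A \<inter> space M \<in> null_sets M \<longleftrightarrow> A \<in> null_sets M))"

text \<open>Stat(G,m,X,mu): m-stationary actions.  g^a A is the image a g ` A.\<close>
definition stationary_action ::
  "('g, 'b) monoid_scheme \<Rightarrow> ('g \<Rightarrow> real) \<Rightarrow> 'x measure \<Rightarrow> ('g \<Rightarrow> 'x \<Rightarrow> 'x) \<Rightarrow> bool" where
  "stationary_action G m M a \<longleftrightarrow> nonsingular_action G M a \<and>
     (\<forall>A\<in>sets M. (\<Sum>\<^sub>\<infinity>g\<in>carrier G. m g * measure M (a g ` A)) = measure M A)"

text \<open>Weak containment a \<preceq> b (sets indexed by {0..<n} instead of {1..n}).\<close>
definition weakly_contained ::
  "('g, 'b) monoid_scheme \<Rightarrow> 'x measure \<Rightarrow> ('g \<Rightarrow> 'x \<Rightarrow> 'x) \<Rightarrow> ('g \<Rightarrow> 'x \<Rightarrow> 'x) \<Rightarrow> bool" where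
  "weakly_contained G M a b \<longleftrightarrow>
     (\<forall>\<epsilon>>0. \<forall>F. finite F \<and> F \<subseteq> carrier G \<longrightarrow>
       (\<forall>n::nat. \<forall>A::nat \<Rightarrow> 'x set. (\<forall>i<n. A i \<in> sets M) \<longrightarrow>
         (\<exists>B::nat \<Rightarrow> 'x set. (\<forall>i<n. B i \<in> sets M) \<and>
           (\<forall>g\<in>F. \<forall>i<n. \<forall>j<n.
              \<bar>measure M (a g ` A i \<inter> A j) - measure M (b g ` B i \<inter> B j)\<bar> < \<epsilon>))))"

end

theory Submission
  imports Defs
begin

text \<open>
  For \<open>k = h\<inverse>g\<close> one has
  \<open>g\<^sup>a A\<^sub>i \<inter> h\<^sup>a A\<^sub>j = h\<^sup>a (k\<^sup>a A\<^sub>i \<inter> A\<^sub>j)\<close>. Apply weak containment, with the group elements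
  \<open>F \<union> {1} \<union> {h\<inverse>g | g, h \<in> F}\<close>, to the family consisting of the \<open>A\<^sub>i\<close>, the whole space
  and the sets \<open>k\<^sup>a A\<^sub>i \<inter> A\<^sub>j\<close>. The approximant \<open>S\<close> of \<open>k\<^sup>a A\<^sub>i \<inter> A\<^sub>j\<close> is then close in
  symmetric difference to \<open>k\<^sup>b B\<^sub>i \<inter> B\<^sub>j\<close>, and \<open>h\<^sup>b\<close> preserves this closeness because a
  nonsingular map is uniformly absolutely continuous on a finite measure space. Since the
  approximant \<open>Y\<close> of the whole space has nearly full measure, the approximation of
  \<open>\<mu>(h\<^sup>a(k\<^sup>a A\<^sub>i \<inter> A\<^sub>j))\<close> by \<open>\<mu>(h\<^sup>b S \<inter> Y)\<close> yields one by \<open>\<mu>(h\<^sup>b S)\<close>.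
  The converse direction takes \<open>h = 1\<close>.
\<close>

lemma (in finite_measure) measure_vimage_uniformly_small:
  assumes N: "finite_measure N" and f: "f \<in> M \<rightarrow>\<^sub>M N"
    and null: "\<And>A. A \<in> null_sets N \<Longrightarrow> f -` A \<inter> space M \<in> null_sets M" and "\<epsilon> > 0"
  shows "\<exists>\<delta>>0. \<forall>C\<in>sets N. measure N C < \<delta> \<longrightarrow> measure M (f -` C \<inter> space M) < \<epsilon>"
proof (rule ccontr)
  assume "\<not> ?thesis"
  then have "\<forall>n::nat. \<exists>C\<in>sets N. measure N C < (1/2)^n \<and> \<epsilon> \<le> measure M (f -` C \<inter> space M)"
    by (metis not_less zero_less_power zero_less_divide_iff zero_less_one zero_less_numeral)
  then obtain C where C: "\<And>n. C n \<in> sets N" "\<And>n. measure N (C n) < (1/2)^n"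
    "\<And>n. \<epsilon> \<le> measure M (f -` C n \<inter> space M)" by metis
  \<comment> \<open>Borel--Cantelli: \<open>limsup C\<close> is null, yet its preimage has measure at least \<open>\<epsilon>\<close>.\<close>
  have "summable (\<lambda>n. measure N (C n))"
    by (rule summable_comparison_test'[OF summable_geometric[of "1/2"]]) (use C(2) less_imp_le in auto)
  then have "limsup C \<in> null_sets N"
    using C(1) by (intro borel_cantelli_limsup1)
      (auto simp: finite_measure.emeasure_finite[OF N] less_top[symmetric])
  then have null_limsup: "f -` limsup C \<inter> space M \<in> null_sets M" by (rule null)
  define D where "D k = (\<Union>n\<in>{k..}. f -` C n \<inter> space M)" for k
  have D_sets: "D k \<in> sets M" for k
    unfolding D_def using measurable_sets[OF f C(1)] by (intro sets.countable_UN') auto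
  have "decseq D"
    unfolding decseq_def D_def by (intro allI impI UN_mono) auto
  then have "(\<lambda>k. measure M (D k)) \<longlonglongrightarrow> measure M (\<Inter>k. D k)"
    using D_sets by (intro finite_Lim_measure_decseq) auto
  moreover have "\<epsilon> \<le> measure M (D k)" for k
  proof -
    have "f -` C k \<inter> space M \<subseteq> D k" by (auto simp: D_def)
    then show ?thesis using C(3)[of k] finite_measure_mono D_sets by (meson order_trans)
  qed
  ultimately have "\<epsilon> \<le> measure M (\<Inter>k. D k)"
    by (intro LIMSEQ_le_const) auto
  moreover have "(\<Inter>k. D k) = f -` limsup C \<inter> space M"
    by (auto simp: D_def limsup_INF_SUP)
  ultimately show False
    using null_limsup \<open>\<epsilon> > 0\<close> by (simp add: measure_eq_0_null_sets)
qed

context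
  fixes G :: "('g, 'b) monoid_scheme" and M :: "'x measure" and a :: "'g \<Rightarrow> 'x \<Rightarrow> 'x"
  assumes group: "group G" and action: "nonsingular_action G M a"
begin

lemma action_measurable: "g \<in> carrier G \<Longrightarrow> a g \<in> M \<rightarrow>\<^sub>M M"
  using action by (simp add: nonsingular_action_def)

lemma action_one: "x \<in> space M \<Longrightarrow> a \<one>\<^bsub>G\<^esub> x = x"
  using action by (simp add: nonsingular_action_def)

lemma action_mult:
  "g \<in> carrier G \<Longrightarrow> h \<in> carrier G \<Longrightarrow> x \<in> space M \<Longrightarrow> a (g \<otimes>\<^bsub>G\<^esub> h) x = a g (a h x)"
  using action by (simp add: nonsingular_action_def)

lemma action_inv_cancel:
  assumes "g \<in> carrier G" and "x \<in> space M"
  shows "a (inv\<^bsub>G\<^esub> g) (a g x) = x" and "a g (a (inv\<^bsub>G\<^esub> g) x) = x"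
  using action_mult[of "inv\<^bsub>G\<^esub> g" g x] action_mult[of g "inv\<^bsub>G\<^esub> g" x] action_one assms
  by (simp_all add: group.l_inv[OF group] group.r_inv[OF group] group.inv_closed[OF group])

lemma action_image_eq_vimage:
  assumes g: "g \<in> carrier G" and A: "A \<subseteq> space M"
  shows "a g ` A = a (inv\<^bsub>G\<^esub> g) -` A \<inter> space M"
proof
  show "a g ` A \<subseteq> a (inv\<^bsub>G\<^esub> g) -` A \<inter> space M"
    using A action_inv_cancel(1)[OF g] measurable_space[OF action_measurable[OF g]] by auto
  show "a (inv\<^bsub>G\<^esub> g) -` A \<inter> space M \<subseteq> a g ` A"
    using action_inv_cancel(2)[OF g] by (auto intro: rev_image_eqI)
qed

lemma action_image_sets: "g \<in> carrier G \<Longrightarrow> A \<in> sets M \<Longrightarrow> a g ` A \<in> sets M"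
  using action_image_eq_vimage[OF _ sets.sets_into_space]
    measurable_sets[OF action_measurable[OF group.inv_closed[OF group]]] by simp

lemma inj_on_action: "g \<in> carrier G \<Longrightarrow> inj_on (a g) (space M)"
  by (metis action_inv_cancel(1) inj_onI)

lemma action_image_one: "A \<subseteq> space M \<Longrightarrow> a \<one>\<^bsub>G\<^esub> ` A = A"
  using action_one by (simp add: subset_eq)

lemma action_image_mult:
  "g \<in> carrier G \<Longrightarrow> h \<in> carrier G \<Longrightarrow> A \<subseteq> space M \<Longrightarrow> a (g \<otimes>\<^bsub>G\<^esub> h) ` A = a g ` a h ` A"
  using action_mult by (force simp: image_image subset_eq)

lemma action_image_subset_space: "g \<in> carrier G \<Longrightarrow> A \<subseteq> space M \<Longrightarrow> a g ` A \<subseteq> space M"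
  using measurable_space[OF action_measurable] by blast

lemma action_image_Int_translate:
  assumes g: "g \<in> carrier G" and h: "h \<in> carrier G" and "A \<subseteq> space M" "A' \<subseteq> space M"
  shows "a g ` A \<inter> a h ` A' = a h ` (a (inv\<^bsub>G\<^esub> h \<otimes>\<^bsub>G\<^esub> g) ` A \<inter> A')"
proof -
  have k: "inv\<^bsub>G\<^esub> h \<otimes>\<^bsub>G\<^esub> g \<in> carrier G" and hk: "h \<otimes>\<^bsub>G\<^esub> (inv\<^bsub>G\<^esub> h \<otimes>\<^bsub>G\<^esub> g) = g"
  proof -
    interpret group G by (rule group)
    show "inv\<^bsub>G\<^esub> h \<otimes>\<^bsub>G\<^esub> g \<in> carrier G" "h \<otimes>\<^bsub>G\<^esub> (inv\<^bsub>G\<^esub> h \<otimes>\<^bsub>G\<^esub> g) = g"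
      using g h by (simp_all add: m_assoc[symmetric])
  qed
  show ?thesis
    using inj_on_image_Int[OF inj_on_action[OF h] action_image_subset_space[OF k \<open>A \<subseteq> space M\<close>]
        \<open>A' \<subseteq> space M\<close>]
      action_image_mult[OF h k \<open>A \<subseteq> space M\<close>] hk by simp
qed

lemma action_image_uniformly_small:
  assumes "finite_measure M" and "finite F" and "F \<subseteq> carrier G" and "\<epsilon> > 0"
  shows "\<exists>\<delta>>0. \<forall>h\<in>F. \<forall>C\<in>sets M. measure M C < \<delta> \<longrightarrow> measure M (a h ` C) < \<epsilon>"
proof -
  have "\<exists>\<delta>>0. \<forall>C\<in>sets M. measure M C < \<delta> \<longrightarrow> measure M (a h ` C) < \<epsilon>" if h: "h \<in> carrier G" for h
  proof -
    have h': "inv\<^bsub>G\<^esub> h \<in> carrier G" using group h by simp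
    have "a (inv\<^bsub>G\<^esub> h) -` A \<inter> space M \<in> null_sets M" if "A \<in> null_sets M" for A
      using action h' that null_setsD2[OF that] by (auto simp: nonsingular_action_def)
    from finite_measure.measure_vimage_uniformly_small[OF assms(1) assms(1)
        action_measurable[OF h'] this \<open>\<epsilon> > 0\<close>]
    show ?thesis by (simp add: action_image_eq_vimage[OF h sets.sets_into_space])
  qed
  then obtain \<delta> where \<delta>: "\<And>h. h \<in> F \<Longrightarrow> \<delta> h > 0 \<and>
      (\<forall>C\<in>sets M. measure M C < \<delta> h \<longrightarrow> measure M (a h ` C) < \<epsilon>)"
    using \<open>F \<subseteq> carrier G\<close> by (metis subsetD)
  show ?thesis
    using \<delta> \<open>finite F\<close> by (intro exI[of _ "Min (insert 1 (\<delta> ` F))"]) auto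
qed

end

lemma (in finite_measure) abs_measure_diff_le_measure_Diff:
  assumes "X \<in> sets M" and "Y \<in> sets M"
  shows "\<bar>measure M X - measure M Y\<bar> \<le> measure M (X - Y) + measure M (Y - X)"
  using finite_measure_Diff'[OF assms] finite_measure_Diff'[OF assms(2,1)]
    measure_nonneg[of M "X - Y"] measure_nonneg[of M "Y - X"] by (simp add: Int_commute)

lemma (in prob_space) abs_measure_diff_Int_le:
  assumes "S \<in> events" and "T \<in> events"
  shows "\<bar>prob S - prob (S \<inter> T)\<bar> \<le> 1 - prob T"
proof -
  have "prob (S - T) \<le> prob (space M - T)"
    using assms by (intro finite_measure_mono) (auto dest: sets.sets_into_space)
  then show ?thesis
    using finite_measure_Diff'[OF assms] prob_compl[OF assms(2)] measure_nonneg[of M "S - T"] by simp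
qed

lemma (in finite_measure) measure_Diff_Int_less:
  assumes sets: "S \<in> sets M" "U \<in> sets M" "V \<in> sets M"
    and "\<bar>d - measure M S\<bar> < e" "\<bar>d - measure M (S \<inter> V)\<bar> < e"
    and "\<bar>d - measure M (U \<inter> S)\<bar> < e" "\<bar>d - measure M (U \<inter> V)\<bar> < e"
  shows "measure M (S - U \<inter> V) < 4 * e" and "measure M (U \<inter> V - S) < 6 * e"
proof -
  have "measure M (S - U \<inter> V) = measure M ((S - V) \<union> (S - U))"
    by (simp add: Diff_Int Un_commute)
  also have "\<dots> \<le> measure M (S - V) + measure M (S - U)"
    using sets by (intro measure_Un_le) auto
  also have "\<dots> = (measure M S - measure M (S \<inter> V)) + (measure M S - measure M (U \<inter> S))"
    using sets by (simp add: finite_measure_Diff' Int_commute)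
  finally show small: "measure M (S - U \<inter> V) < 4 * e"
    using assms(4-6) by linarith
  have "measure M (U \<inter> V - S) = measure M (U \<inter> V) - measure M S + measure M (S - U \<inter> V)"
    using sets by (simp add: finite_measure_Diff' Int_ac)
  then show "measure M (U \<inter> V - S) < 6 * e"
    using small assms(4,7) by linarith
qed

lemma (in prob_space) measure_image_Int_approx:
  assumes inj: "inj_on f (space M)" and f_sets: "\<And>C. C \<in> events \<Longrightarrow> f ` C \<in> events"
    and f_small: "\<And>C. C \<in> events \<Longrightarrow> prob C < \<eta> \<Longrightarrow> prob (f ` C) < \<epsilon> / 4"
    and e: "6 * e \<le> \<eta>" "4 * e \<le> \<epsilon>"
    and sets: "S \<in> events" "U \<in> events" "V \<in> events" "X \<in> events"
    and approx: "\<bar>d - prob S\<bar> < e" "\<bar>d - prob (S \<inter> V)\<bar> < e"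
      "\<bar>d - prob (U \<inter> S)\<bar> < e" "\<bar>d - prob (U \<inter> V)\<bar> < e"
      "\<bar>1 - prob X\<bar> < e" "\<bar>d' - prob (f ` S \<inter> X)\<bar> < e"
  shows "\<bar>d' - prob (f ` (U \<inter> V))\<bar> < \<epsilon>"
proof -
  have UV: "U \<inter> V \<in> events" using sets by auto
  have subsets: "S \<subseteq> space M" "U \<inter> V \<subseteq> space M"
    using sets by (auto dest: sets.sets_into_space)
  have "prob (S - U \<inter> V) < \<eta>" "prob (U \<inter> V - S) < \<eta>"
    using measure_Diff_Int_less[OF sets(1-3) approx(1-4)] e abs_ge_zero[of "d - prob S"] approx(1)
    by auto
  then have "prob (f ` S - f ` (U \<inter> V)) < \<epsilon> / 4" "prob (f ` (U \<inter> V) - f ` S) < \<epsilon> / 4"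
    using f_small sets UV inj_on_image_set_diff[OF inj] subsets by (metis Diff_subset order_trans sets.Diff)+
  then have "\<bar>prob (f ` S) - prob (f ` (U \<inter> V))\<bar> < \<epsilon> / 2"
    using abs_measure_diff_le_measure_Diff[OF f_sets[OF sets(1)] f_sets[OF UV]] by linarith
  moreover have "\<bar>prob (f ` S) - prob (f ` S \<inter> X)\<bar> < e"
    using abs_measure_diff_Int_le[OF f_sets[OF sets(1)] sets(4)] approx(5) by linarith
  ultimately show ?thesis
    using approx(6) e by linarith
qed

lemma weakly_containedD_finite_family:
  assumes W: "weakly_contained G M a b" and "\<epsilon> > 0" and F: "finite F" "F \<subseteq> carrier G"
    and I: "finite I" and A: "\<And>i. i \<in> I \<Longrightarrow> A i \<in> sets M"
  obtains B where "\<And>i. i \<in> I \<Longrightarrow> B i \<in> sets M"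
    and "\<And>g i j. g \<in> F \<Longrightarrow> i \<in> I \<Longrightarrow> j \<in> I \<Longrightarrow>
      \<bar>measure M (a g ` A i \<inter> A j) - measure M (b g ` B i \<inter> B j)\<bar> < \<epsilon>"
proof -
  obtain e where e: "bij_betw e {..<card I} I"
    using ex_bij_betw_nat_finite[OF I] by (auto simp: atLeast0LessThan)
  then have "\<forall>k<card I. A (e k) \<in> sets M"
    using A by (auto simp: bij_betw_def)
  with W[unfolded weakly_contained_def, rule_format, of \<epsilon> F "card I" "A \<circ> e"] \<open>\<epsilon> > 0\<close> F
  obtain B' where B': "\<forall>k<card I. B' k \<in> sets M" and
    close: "\<forall>g\<in>F. \<forall>k<card I. \<forall>l<card I.
      \<bar>measure M (a g ` A (e k) \<inter> A (e l)) - measure M (b g ` B' k \<inter> B' l)\<bar> < \<epsilon>"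
    by auto
  define e' where "e' = inv_into {..<card I} e"
  have e': "e' i < card I" "e (e' i) = i" if "i \<in> I" for i
    using that e bij_betw_inv_into_right[OF e] bij_betwE[OF bij_betw_inv_into[OF e]]
    unfolding e'_def by auto
  show ?thesis
  proof (rule that[of "B' \<circ> e'"])
    show "(B' \<circ> e') i \<in> sets M" if "i \<in> I" for i
      using B' e' that by simp
    show "\<bar>measure M (a g ` A i \<inter> A j) - measure M (b g ` (B' \<circ> e') i \<inter> (B' \<circ> e') j)\<bar> < \<epsilon>"
      if "g \<in> F" "i \<in> I" "j \<in> I" for g i j
      using close e' that by (metis comp_apply)
  qed
qed

lemma weakly_contained_two_sided:
  assumes G: "group G" and M: "prob_space M"
    and a: "nonsingular_action G M a" and b: "nonsingular_action G M b"
    and W: "weakly_contained G M a b"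
    and F: "finite F" "F \<subseteq> carrier G" and "\<epsilon> > 0" and A: "\<forall>i<(n::nat). A i \<in> sets M"
  shows "\<exists>B. (\<forall>i<n. B i \<in> sets M) \<and> (\<forall>g\<in>F. \<forall>h\<in>F. \<forall>i<n. \<forall>j<n.
    \<bar>measure M (a g ` A i \<inter> a h ` A j) - measure M (b g ` B i \<inter> b h ` B j)\<bar> < \<epsilon>)"
proof -
  interpret prob_space M by (rule M)
  interpret G: group G by (rule G)
  obtain \<eta> where "\<eta> > 0" and \<eta>: "\<forall>h\<in>F. \<forall>C\<in>events. prob C < \<eta> \<longrightarrow> prob (b h ` C) < \<epsilon> / 4"
    using action_image_uniformly_small[OF G b finite_measure_axioms F, of "\<epsilon> / 4"] \<open>\<epsilon> > 0\<close> by auto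
  define e where "e = min (\<epsilon> / 4) (\<eta> / 6)"
  define K where "K = (\<lambda>(g, h). inv\<^bsub>G\<^esub> h \<otimes>\<^bsub>G\<^esub> g) ` (F \<times> F)"
  define I where "I = Inl ` insert None (Some ` {..<n}) \<union> Inr ` (K \<times> {..<n} \<times> {..<n})"
  define E where "E = case_sum (case_option (space M) A) (\<lambda>(k, i, j). a k ` A i \<inter> A j)"
  have K: "finite K" "K \<subseteq> carrier G"
    using F G by (auto simp: K_def)
  have "E t \<in> sets M" if "t \<in> I" for t
    using that A subsetD[OF K(2)] by (auto simp: I_def E_def intro!: sets.Int action_image_sets[OF G a])
  moreover have "finite I" "finite (insert \<one>\<^bsub>G\<^esub> (F \<union> K))" "insert \<one>\<^bsub>G\<^esub> (F \<union> K) \<subseteq> carrier G"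
    using F K G by (auto simp: I_def)
  ultimately obtain B where B_sets: "\<And>t. t \<in> I \<Longrightarrow> B t \<in> sets M" and
    close: "\<And>g s t. g \<in> insert \<one>\<^bsub>G\<^esub> (F \<union> K) \<Longrightarrow> s \<in> I \<Longrightarrow> t \<in> I \<Longrightarrow>
      \<bar>prob (a g ` E s \<inter> E t) - prob (b g ` B s \<inter> B t)\<bar> < e"
    using weakly_containedD_finite_family[OF W] \<open>\<epsilon> > 0\<close> \<open>\<eta> > 0\<close>
    unfolding e_def by (metis min_less_iff_conj zero_less_divide_iff zero_less_numeral)
  show ?thesis
  proof (intro exI[of _ "\<lambda>i. B (Inl (Some i))"] conjI allI ballI impI)
    fix g h i j assume g: "g \<in> F" and h: "h \<in> F" and ij: "i < n" "j < n"
    define k where "k = inv\<^bsub>G\<^esub> h \<otimes>\<^bsub>G\<^esub> g"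
    define D where "D = a k ` A i \<inter> A j"
    let ?S = "B (Inr (k, i, j))" and ?X = "B (Inl None)"
      and ?U = "b k ` B (Inl (Some i))" and ?V = "B (Inl (Some j))"
    have idx: "k \<in> K" "Inl None \<in> I" "Inl (Some i) \<in> I" "Inl (Some j) \<in> I" "Inr (k, i, j) \<in> I"
      using g h ij by (auto simp: I_def K_def k_def)
    have gh: "g \<in> carrier G" "h \<in> carrier G"
      using g h F by auto
    have k: "k \<in> carrier G"
      using idx(1) K(2) by auto
    have "A i \<in> events" "A j \<in> events" "D \<in> events"
      using A ij action_image_sets[OF G a k] by (auto simp: D_def)
    then have sub: "A i \<subseteq> space M" "A j \<subseteq> space M" "D \<subseteq> space M"
      "\<And>t. t \<in> I \<Longrightarrow> B t \<subseteq> space M"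
      using B_sets by (simp_all add: sets.sets_into_space)
    note one = action_image_one[OF G a] action_image_one[OF G b]
    have "\<bar>prob (a h ` D) - prob (b h ` (?U \<inter> ?V))\<bar> < \<epsilon>"
    proof (rule measure_image_Int_approx
        [where d = "prob D" and S = ?S and X = ?X and e = e and \<eta> = \<eta>])
      show "\<bar>1 - prob ?X\<bar> < e"
        using close[of "\<one>\<^bsub>G\<^esub>" "Inl None" "Inl None"] idx sub one by (simp add: E_def prob_space)
      show "\<bar>prob D - prob ?S\<bar> < e"
        using close[of "\<one>\<^bsub>G\<^esub>" "Inr (k, i, j)" "Inr (k, i, j)"] idx sub one by (simp add: E_def D_def)
      show "\<bar>prob D - prob (?S \<inter> ?V)\<bar> < e"
        using close[of "\<one>\<^bsub>G\<^esub>" "Inr (k, i, j)" "Inl (Some j)"] idx sub one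
        by (simp add: E_def D_def Int_assoc)
      show "\<bar>prob D - prob (?U \<inter> ?S)\<bar> < e"
        using close[of k "Inl (Some i)" "Inr (k, i, j)"] idx by (simp add: E_def D_def Int_assoc[symmetric])
      show "\<bar>prob D - prob (?U \<inter> ?V)\<bar> < e"
        using close[of k "Inl (Some i)" "Inl (Some j)"] idx by (simp add: E_def D_def)
      show "\<bar>prob (a h ` D) - prob (b h ` ?S \<inter> ?X)\<bar> < e"
        using close[of h "Inr (k, i, j)" "Inl None"] idx h action_image_subset_space[OF G a gh(2) sub(3)]
        by (simp add: E_def D_def Int_absorb2)
    qed (use \<eta> h idx B_sets k gh inj_on_action[OF G b] action_image_sets[OF G b]
      in \<open>auto simp: e_def\<close>)
    moreover have "a g ` A i \<inter> a h ` A j = a h ` D"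
      using action_image_Int_translate[OF G a gh sub(1,2)] by (simp add: D_def k_def)
    moreover have "b g ` B (Inl (Some i)) \<inter> b h ` ?V = b h ` (?U \<inter> ?V)"
      using action_image_Int_translate[OF G b gh sub(4)[OF idx(3)] sub(4)[OF idx(4)]] by (simp add: k_def)
    ultimately show "\<bar>prob (a g ` A i \<inter> a h ` A j) - prob (b g ` B (Inl (Some i)) \<inter> b h ` ?V)\<bar> < \<epsilon>"
      by simp
  qed (use B_sets in \<open>auto simp: I_def\<close>)
qed

lemma weakly_contained_if_two_sided:
  assumes G: "group G" and a: "nonsingular_action G M a" and b: "nonsingular_action G M b"
    and two_sided: "\<forall>F. finite F \<and> F \<subseteq> carrier G \<longrightarrow>
      (\<forall>\<epsilon>>0. \<forall>n::nat. \<forall>A. (\<forall>i<n. A i \<in> sets M) \<longrightarrow>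
        (\<exists>B. (\<forall>i<n. B i \<in> sets M) \<and> (\<forall>g\<in>F. \<forall>h\<in>F. \<forall>i<n. \<forall>j<n.
          \<bar>measure M (a g ` A i \<inter> a h ` A j) - measure M (b g ` B i \<inter> b h ` B j)\<bar> < \<epsilon>)))"
  shows "weakly_contained G M a b"
  unfolding weakly_contained_def
proof (intro allI impI)
  fix \<epsilon> :: real and F n and A :: "nat \<Rightarrow> _"
  assume "\<epsilon> > 0" and F: "finite F \<and> F \<subseteq> carrier G" and A: "\<forall>i<n. A i \<in> sets M"
  have "finite (insert \<one>\<^bsub>G\<^esub> F) \<and> insert \<one>\<^bsub>G\<^esub> F \<subseteq> carrier G"
    using F G by (simp add: group.is_monoid monoid.one_closed)
  then obtain B where B: "\<forall>i<n. B i \<in> sets M" and close: "\<forall>g\<in>insert \<one>\<^bsub>G\<^esub> F. \<forall>h\<in>insert \<one>\<^bsub>G\<^esub> F. \<forall>i<n. \<forall>j<n.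
      \<bar>measure M (a g ` A i \<inter> a h ` A j) - measure M (b g ` B i \<inter> b h ` B j)\<bar> < \<epsilon>"
    using two_sided[rule_format, of "insert \<one>\<^bsub>G\<^esub> F" \<epsilon> n A] \<open>\<epsilon> > 0\<close> A by blast
  show "\<exists>B. (\<forall>i<n. B i \<in> sets M) \<and> (\<forall>g\<in>F. \<forall>i<n. \<forall>j<n.
      \<bar>measure M (a g ` A i \<inter> A j) - measure M (b g ` B i \<inter> B j)\<bar> < \<epsilon>)"
  proof (intro exI[of _ B] conjI allI ballI impI)
    fix g i j assume "g \<in> F" "i < n" "j < n"
    moreover have "A j \<subseteq> space M" "B j \<subseteq> space M"
      using A B \<open>j < n\<close> by (simp_all add: sets.sets_into_space)
    ultimately show "\<bar>measure M (a g ` A i \<inter> A j) - measure M (b g ` B i \<inter> B j)\<bar> < \<epsilon>"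
      using close[rule_format, of g "\<one>\<^bsub>G\<^esub>" i j]
        action_image_one[OF G a, of "A j"] action_image_one[OF G b, of "B j"] by simp
  qed (use B in simp)
qed

theorem mainTheorem1:
  fixes G :: "('g, 'b) monoid_scheme"
    and m :: "'g \<Rightarrow> real"
    and M :: "'x::polish_space measure"
    and a b :: "'g \<Rightarrow> 'x \<Rightarrow> 'x"
  assumes "group G"
    and "countable (carrier G)"
    and "prob_on_group G m"
    and "prob_space M"
    and "sets M = sets borel"
    and "stationary_action G m M a"
    and "stationary_action G m M b"
  shows "weakly_contained G M a b \<longleftrightarrow>
    (\<forall>F. finite F \<and> F \<subseteq> carrier G \<longrightarrow>
      (\<forall>\<epsilon>>0. \<forall>n::nat. \<forall>A::nat \<Rightarrow> 'x set. (\<forall>i<n. A i \<in> sets M) \<longrightarrow>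
        (\<exists>B::nat \<Rightarrow> 'x set. (\<forall>i<n. B i \<in> sets M) \<and>
          (\<forall>g\<in>F. \<forall>h\<in>F. \<forall>i<n. \<forall>j<n.
             \<bar>measure M (a g ` A i \<inter> a h ` A j) - measure M (b g ` B i \<inter> b h ` B j)\<bar> < \<epsilon>))))"
proof -
  have a: "nonsingular_action G M a" and b: "nonsingular_action G M b"
    using assms(6,7) by (simp_all add: stationary_action_def)
  show ?thesis
    using weakly_contained_two_sided[OF assms(1,4) a b] weakly_contained_if_two_sided[OF assms(1) a b]
    by blast
qed

end
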